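(* Let $n\ge 2$, let $a$ be the smallest prime divisor of $n$, and let $q$ be any prime power. Then $$\frac{1}{a}\prod_{\substack{k=1\\ a\nmid k}}^{n-1}(q^n-q^k)\ge q^{n(n-(n/a)-1)},$$ with equality only when $(n,q)=(2,2)$ or $(n,q)=(3,2)$. *)

theory Defs
  imports Complex_Main "HOL-Computational_Algebra.Primes"
begin

end

theory Submission
  imports Defs
begin

text \<open>
  Let F(n) be the product of q^n - q^k over 1 \<le> k < n. Shifting k gives F(n+1) = q^n (q^n - 1) F(n),
  so by induction n q^(n(n-2)) \<le> F(n) for q \<ge> 2, the step reducing to (n+1) q^(n-1) \<le> n (q^n - 1);
  the bound is strict unless q = 2 and n \<le> 3. If n = a d, the d - 1 factors with a dividing k are
  each at most q^n; dividing them out of F(n) and using a \<le> n shows that the product of the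
  remaining factors is at least a q^(n(n-d-1)).
\<close>

lemma prod_power_diff_Suc:
  fixes q :: "'a::comm_ring_1"
  assumes "n \<ge> 1"
  shows "(\<Prod>k\<in>{1..<Suc n}. q ^ Suc n - q ^ k) = q ^ n * (q ^ n - 1) * (\<Prod>k\<in>{1..<n}. q ^ n - q ^ k)"
proof -
  have "(\<Prod>k\<in>{1..<Suc n}. q ^ Suc n - q ^ k) = (\<Prod>k<n. q ^ Suc n - q ^ Suc k)"
    by (simp only: One_nat_def prod.shift_bounds_Suc_ivl lessThan_atLeast0)
  also have "\<dots> = (\<Prod>k<n. q * (q ^ n - q ^ k))"
    by (simp add: right_diff_distrib)
  also have "\<dots> = q ^ n * (\<Prod>k<n. q ^ n - q ^ k)"
    by (simp add: prod.distrib)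
  also have "(\<Prod>k<n. q ^ n - q ^ k) = (q ^ n - 1) * (\<Prod>k\<in>{1..<n}. q ^ n - q ^ k)"
    using assms by (simp add: lessThan_atLeast0 prod.atLeast_Suc_lessThan)
  finally show ?thesis by (simp only: mult.assoc)
qed

lemma Suc_times_power_pred_le:
  fixes q :: real
  assumes "q \<ge> 2" "n \<ge> 2"
  shows "(real n + 1) * q ^ (n - 1) \<le> n * (q ^ n - 1)"
    and "q > 2 \<or> n \<ge> 3 \<Longrightarrow> (real n + 1) * q ^ (n - 1) < n * (q ^ n - 1)"
proof -
  define x where "x = q ^ (n - 1)"
  have qn: "q ^ n = q * x"
    using assms(2) by (simp add: x_def power_eq_if[of q n])
  have "q ^ 1 \<le> x"
    unfolding x_def using assms by (intro power_increasing) auto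
  then have x: "x \<ge> 2"
    using assms(1) by simp
  have n: "real n \<ge> 2"
    using assms(2) by simp
  have gap: "n * (q ^ n - 1) - (real n + 1) * x = x * (n * (q - 2) + (real n - 1)) - n"
    by (simp add: qn algebra_simps)
  have base: "2 * (real n - 1) \<le> x * (real n - 1)"
    using n x by (intro mult_right_mono) auto
  also have "\<dots> \<le> x * (n * (q - 2) + (real n - 1))"
    using assms x by (intro mult_left_mono) auto
  finally have lower: "2 * (real n - 1) \<le> x * (n * (q - 2) + (real n - 1))" .
  then show "(real n + 1) * q ^ (n - 1) \<le> n * (q ^ n - 1)"
    using n gap unfolding x_def by (smt (verit))
  assume "q > 2 \<or> n \<ge> 3"
  then show "(real n + 1) * q ^ (n - 1) < n * (q ^ n - 1)"
  proof
    assume "q > 2"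
    then have "x * (real n - 1) < x * (n * (q - 2) + (real n - 1))"
      using n x by (intro mult_strict_left_mono) auto
    with base show ?thesis
      using n gap unfolding x_def by (smt (verit))
  next
    assume "n \<ge> 3"
    then have "real n \<ge> 3"
      by simp
    with lower gap show ?thesis
      unfolding x_def by (smt (verit))
  qed
qed

lemma Suc_times_power_bound_le:
  fixes q :: real
  assumes "q \<ge> 2" "n \<ge> 2"
  shows "Suc n * q ^ (Suc n * (Suc n - 2)) \<le> q ^ n * (q ^ n - 1) * (n * q ^ (n * (n - 2)))"
    and "q > 2 \<or> n \<ge> 3 \<Longrightarrow>
      Suc n * q ^ (Suc n * (Suc n - 2)) < q ^ n * (q ^ n - 1) * (n * q ^ (n * (n - 2)))"
proof -
  obtain m where m: "n = m + 2"
    using assms(2) le_Suc_ex by (metis add.commute)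
  have "Suc n * (Suc n - 2) = (n - 1) + n + n * (n - 2)"
    unfolding m by (simp add: algebra_simps)
  then have lhs: "Suc n * q ^ (Suc n * (Suc n - 2)) = (real n + 1) * q ^ (n - 1) * (q ^ n * q ^ (n * (n - 2)))"
    by (simp add: power_add)
  have rhs: "q ^ n * (q ^ n - 1) * (n * q ^ (n * (n - 2))) = n * (q ^ n - 1) * (q ^ n * q ^ (n * (n - 2)))"
    by (simp add: algebra_simps)
  have pos: "q ^ n * q ^ (n * (n - 2)) > 0"
    using assms(1) by simp
  show "Suc n * q ^ (Suc n * (Suc n - 2)) \<le> q ^ n * (q ^ n - 1) * (n * q ^ (n * (n - 2)))"
    unfolding lhs rhs using Suc_times_power_pred_le(1)[OF assms] pos by (intro mult_right_mono) auto
  show "Suc n * q ^ (Suc n * (Suc n - 2)) < q ^ n * (q ^ n - 1) * (n * q ^ (n * (n - 2)))"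
    if "q > 2 \<or> n \<ge> 3"
    unfolding lhs rhs using Suc_times_power_pred_le(2)[OF assms that] pos by (intro mult_strict_right_mono)
qed

lemma prod_power_diff_ge:
  fixes q :: real
  assumes "q \<ge> 2" "n \<ge> 2"
  shows "n * q ^ (n * (n - 2)) \<le> (\<Prod>k\<in>{1..<n}. q ^ n - q ^ k)"
  using assms(2)
proof (induction n rule: dec_induct)
  case base
  have "2 * 1 \<le> q * (q - 1)"
    using assms(1) by (intro mult_mono) auto
  then show ?case
    by (simp add: numeral_2_eq_2 algebra_simps)
next
  case (step n)
  have "q ^ n * (q ^ n - 1) \<ge> 0"
    using assms(1) by simp
  have "Suc n * q ^ (Suc n * (Suc n - 2)) \<le> q ^ n * (q ^ n - 1) * (n * q ^ (n * (n - 2)))"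
    using Suc_times_power_bound_le(1)[OF assms(1) step.hyps(1)] .
  also have "\<dots> \<le> q ^ n * (q ^ n - 1) * (\<Prod>k\<in>{1..<n}. q ^ n - q ^ k)"
    using step.IH \<open>q ^ n * (q ^ n - 1) \<ge> 0\<close> by (rule mult_left_mono)
  also have "\<dots> = (\<Prod>k\<in>{1..<Suc n}. q ^ Suc n - q ^ k)"
    using step.hyps(1) by (intro prod_power_diff_Suc[symmetric]) simp
  finally show ?case .
qed

lemma prod_power_diff_gt:
  fixes q :: real
  assumes "q \<ge> 2" "n \<ge> 2" "q > 2 \<or> n \<ge> 4"
  shows "n * q ^ (n * (n - 2)) < (\<Prod>k\<in>{1..<n}. q ^ n - q ^ k)"
proof (cases "n = 2")
  case True
  then have "q > 2"
    using assms(3) by simp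
  then have "2 * 1 < q * (q - 1)"
    by (intro mult_strict_mono) auto
  then show ?thesis
    using True by (simp add: numeral_2_eq_2 algebra_simps)
next
  case False
  then obtain m where n: "n = Suc m" and m: "m \<ge> 2"
    using assms(2) by (metis Suc_le_D le_antisym numeral_2_eq_2 not_less_eq_eq)
  have "q > 2 \<or> m \<ge> 3"
    using assms(3) n by auto
  have "q ^ m * (q ^ m - 1) \<ge> 0"
    using assms(1) by simp
  have "Suc m * q ^ (Suc m * (Suc m - 2)) < q ^ m * (q ^ m - 1) * (m * q ^ (m * (m - 2)))"
    using Suc_times_power_bound_le(2)[OF assms(1) m \<open>q > 2 \<or> m \<ge> 3\<close>] .
  also have "\<dots> \<le> q ^ m * (q ^ m - 1) * (\<Prod>k\<in>{1..<m}. q ^ m - q ^ k)"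
    using prod_power_diff_ge[OF assms(1) m] \<open>q ^ m * (q ^ m - 1) \<ge> 0\<close> by (rule mult_left_mono)
  also have "\<dots> = (\<Prod>k\<in>{1..<Suc m}. q ^ Suc m - q ^ k)"
    using m by (intro prod_power_diff_Suc[symmetric]) simp
  finally show ?thesis
    unfolding n .
qed

lemma card_multiples_lessThan:
  fixes a d :: nat
  assumes "a > 0"
  shows "card ({1..<a * d} \<inter> {k. a dvd k}) = d - 1"
proof -
  have "{1..<a * d} \<inter> {k. a dvd k} = (*) a ` {1..<d}"
    using assms by auto
  then show ?thesis
    using assms by (simp add: card_image inj_on_def)
qed

lemma prod_power_diff_nonmultiples_bound:
  fixes q :: real
  assumes "q \<ge> 2" "a \<ge> 2" "a dvd n" "n > 0"
  shows "a * q ^ (n * (n - n div a - 1)) \<le> (\<Prod>k\<in>{1..<n} - {k. a dvd k}. q ^ n - q ^ k)"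
    and "q > 2 \<or> n \<ge> 4 \<Longrightarrow>
      a * q ^ (n * (n - n div a - 1)) < (\<Prod>k\<in>{1..<n} - {k. a dvd k}. q ^ n - q ^ k)"
proof -
  obtain d where n: "n = a * d"
    using assms(3) by blast
  have d: "d \<ge> 1" "n div a = d"
    using n assms(2,4) by auto
  have "2 * d \<le> n"
    using n assms(2) by simp
  then have "n \<ge> 2" "d + 1 \<le> n"
    using d by linarith+
  define f where "f k = q ^ n - q ^ k" for k
  define P where "P = prod f ({1..<n} - {k. a dvd k})"
  define Q where "Q = (q ^ n) ^ (d - 1)"
  have f_bounds: "0 \<le> f k \<and> f k \<le> q ^ n" if "k \<le> n" for k
    unfolding f_def using assms(1) that by (simp add: power_increasing)
  have "prod f {1..<n} = prod f ({1..<n} \<inter> {k. a dvd k}) * P"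
    unfolding P_def by (rule prod.Int_Diff) simp
  also have "\<dots> \<le> Q * P"
  proof (rule mult_right_mono)
    show "prod f ({1..<n} \<inter> {k. a dvd k}) \<le> Q"
      unfolding Q_def using assms(1,2) f_bounds card_multiples_lessThan[of a d] n
      by (intro prod_le_power) auto
    show "P \<ge> 0"
      unfolding P_def using f_bounds by (intro prod_nonneg) auto
  qed
  finally have upper: "prod f {1..<n} \<le> Q * P" .
  have "n - d - 1 + (d - 1) = n - 2"
    using d \<open>d + 1 \<le> n\<close> by linarith
  then have exponent: "n * (n - d - 1) + n * (d - 1) = n * (n - 2)"
    by (metis add_mult_distrib2)
  have "Q * q ^ (n * (n - d - 1)) = q ^ (n * (n - 2))"
    unfolding Q_def power_mult[symmetric] exponent[symmetric] power_add by (rule mult.commute)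
  then have "Q * (a * q ^ (n * (n - n div a - 1))) = a * q ^ (n * (n - 2))"
    unfolding d(2) by (simp only: mult.left_commute[of Q])
  also have "\<dots> \<le> n * q ^ (n * (n - 2))"
    using assms(1,3,4) by (intro mult_right_mono) (simp_all add: dvd_imp_le)
  finally have lower: "Q * (a * q ^ (n * (n - n div a - 1))) \<le> n * q ^ (n * (n - 2))" .
  have "Q > 0"
    unfolding Q_def using assms(1) by simp
  show "a * q ^ (n * (n - n div a - 1)) \<le> (\<Prod>k\<in>{1..<n} - {k. a dvd k}. q ^ n - q ^ k)"
  proof -
    note lower
    also have "n * q ^ (n * (n - 2)) \<le> prod f {1..<n}"
      unfolding f_def using assms(1) \<open>n \<ge> 2\<close> by (rule prod_power_diff_ge)
    also note upper
    finally show ?thesis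
      using \<open>Q > 0\<close> unfolding P_def f_def by simp
  qed
  show "a * q ^ (n * (n - n div a - 1)) < (\<Prod>k\<in>{1..<n} - {k. a dvd k}. q ^ n - q ^ k)"
    if "q > 2 \<or> n \<ge> 4"
  proof -
    note lower
    also have "n * q ^ (n * (n - 2)) < prod f {1..<n}"
      unfolding f_def using assms(1) \<open>n \<ge> 2\<close> that by (rule prod_power_diff_gt)
    also note upper
    finally show ?thesis
      using \<open>Q > 0\<close> unfolding P_def f_def by simp
  qed
qed

lemma powr_divisor_exponent_eq_power:
  fixes x :: real
  assumes "x > 0" "a \<ge> 2" "a dvd n" "n > 0"
  shows "x powr (real n * (real n - real n / real a - 1)) = x ^ (n * (n - n div a - 1))"
proof -
  have "n div a < n"
    using assms by (intro div_less_dividend) auto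
  then have exponent: "real n * (real n - real n / real a - 1) = real (n * (n - n div a - 1))"
    using assms(3) by (simp add: real_of_nat_div)
  show ?thesis
    unfolding exponent using assms(1) by (rule powr_realpow)
qed

theorem lemma5p6:
  fixes n a q :: nat
  assumes "n \<ge> 2"
    and "prime a" and "a dvd n"
    and "\<forall>p. prime p \<and> p dvd n \<longrightarrow> a \<le> p"
    and "\<exists>p m. prime p \<and> m \<ge> 1 \<and> q = p ^ m"
  shows "(1 / real a) * (\<Prod>k\<in>{k. 1 \<le> k \<and> k \<le> n - 1 \<and> \<not> a dvd k}. (real q ^ n - real q ^ k))
           \<ge> real q powr (real n * (real n - real n / real a - 1))
       \<and> ((1 / real a) * (\<Prod>k\<in>{k. 1 \<le> k \<and> k \<le> n - 1 \<and> \<not> a dvd k}. (real q ^ n - real q ^ k))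
           = real q powr (real n * (real n - real n / real a - 1))
          \<longrightarrow> (n, q) = (2, 2) \<or> (n, q) = (3, 2))"
proof -
  obtain p m where "prime p" "m \<ge> 1" "q = p ^ m"
    using assms(5) by blast
  then have "q \<ge> 2"
    using prime_ge_2_nat[of p] self_le_power[of p m] by simp
  then have q: "real q \<ge> 2"
    by simp
  have a: "a \<ge> 2"
    using assms(2) prime_ge_2_nat by blast
  have powr_eq: "real q powr (real n * (real n - real n / real a - 1)) = real q ^ (n * (n - n div a - 1))"
    using q a assms(1,3) by (intro powr_divisor_exponent_eq_power) auto
  have set_eq: "{k. 1 \<le> k \<and> k \<le> n - 1 \<and> \<not> a dvd k} = {1..<n} - {k. a dvd k}"
    using assms(1) by auto
  define P where "P = (\<Prod>k\<in>{1..<n} - {k. a dvd k}. real q ^ n - real q ^ k)"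
  define E where "E = real q ^ (n * (n - n div a - 1))"
  have "a * E \<le> P"
    unfolding E_def P_def using prod_power_diff_nonmultiples_bound(1)[OF q a assms(3)] assms(1) by simp
  then have "E \<le> 1 / a * P"
    using a by (simp add: field_simps)
  moreover have "(n, q) = (2, 2) \<or> (n, q) = (3, 2)" if "1 / a * P = E"
  proof -
    from that have "\<not> a * E < P"
      using a by (simp add: field_simps)
    then have "\<not> (real q > 2 \<or> n \<ge> 4)"
      unfolding E_def P_def using prod_power_diff_nonmultiples_bound(2)[OF q a assms(3)] assms(1) by auto
    then show ?thesis
      using q assms(1) by auto
  qed
  ultimately show ?thesis
    unfolding powr_eq set_eq P_def[symmetric] E_def[symmetric] by blast
qed

end
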